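(* Let $\beta\in(0,1)$. There exists a constant $C_0>0$ (depending on $\beta$) such that for every $\gamma\in(\beta,2-\beta)$ and every $\epsilon\in(0,\frac12]$, \[ \inf_{M_\gamma}E^\gamma_\epsilon\le\frac{\pi\gamma^2}{2\log\frac1\delta}+\frac{C_0}{(\log\frac1\delta)^2},\qquad\delta=\epsilon\log\frac1\epsilon. \]
   Context: $B_1^+(0)=B_1(0)\cap\mathbb{R}^2_+$, $\partial^+B_1(0)=\partial B_1(0)\cap\mathbb{R}^2_+$. $M_\gamma=\{\mu\in W^{1,2}(-1,1):\mu(0)=1,\ \mu(\pm1)\le1-\gamma\}$. For $\mu\in M_\gamma$, $W^{1,2}_\mu(B_1^+(0))$ is the set of $w\in W^{1,2}(B_1^+(0))$ with $w(x_1,0)=\mu(x_1)$ on $(-1,1)$ and $w\le1-\gamma$ on $\partial^+B_1(0)$. $E^\gamma_\epsilon(\mu)=\frac\epsilon2\int_{-1}^1\frac{(\mu')^2}{1-\mu^2}dx_1+\frac12\inf_{w\in W^{1,2}_\mu(B_1^+(0))}\int_{B_1^+(0)}|\nabla w|^2dx$. *)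

theory Defs
  imports "HOL-Analysis.Analysis"
begin

definition half_disk :: "(real \<times> real) set" where
  "half_disk = {(x, y). x\<^sup>2 + y\<^sup>2 < 1 \<and> 0 < y}"

definition half_circle :: "(real \<times> real) set" where
  "half_circle = {(x, y). x\<^sup>2 + y\<^sup>2 = 1 \<and> 0 < y}"

text \<open>W^{1,2}(-1,1): mu is (on [-1,1]) an indefinite integral of some g in L^2(-1,1);
  g is then the (a.e. unique) derivative mu'.\<close>
definition W12_interval :: "(real \<Rightarrow> real) \<Rightarrow> (real \<Rightarrow> real) \<Rightarrow> bool" where
  "W12_interval \<mu> g \<longleftrightarrow>
     g \<in> borel_measurable lborel \<and>
     set_integrable lborel {-1..1} g \<and>
     set_integrable lborel {-1..1} (\<lambda>x. (g x)\<^sup>2) \<and>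
     (\<forall>x\<in>{-1..1}. \<mu> x = \<mu> (-1) + (LBINT t=-1..x. g t))"

text \<open>M_gamma (with the standing constraint |mu| <= 1, mu being a component of a unit vector).\<close>
definition M_gamma :: "real \<Rightarrow> (real \<Rightarrow> real) set" where
  "M_gamma \<gamma> = {\<mu>. (\<exists>g. W12_interval \<mu> g) \<and> \<mu> 0 = 1 \<and>
       \<mu> (-1) \<le> 1 - \<gamma> \<and> \<mu> 1 \<le> 1 - \<gamma> \<and> (\<forall>x\<in>{-1..1}. \<bar>\<mu> x\<bar> \<le> 1)}"

definition test_fun :: "(real \<times> real) set \<Rightarrow> (real \<times> real \<Rightarrow> real)
      \<Rightarrow> (real \<times> real \<Rightarrow> real) \<Rightarrow> (real \<times> real \<Rightarrow> real) \<Rightarrow> bool" where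
  "test_fun U \<phi> p1 p2 \<longleftrightarrow>
     continuous_on UNIV p1 \<and> continuous_on UNIV p2 \<and>
     (\<forall>z. (\<phi> has_derivative (\<lambda>h. p1 z * fst h + p2 z * snd h)) (at z)) \<and>
     (\<exists>K. compact K \<and> K \<subseteq> U \<and> (\<forall>z. z \<notin> K \<longrightarrow> \<phi> z = 0))"

definition W12_2d :: "(real \<times> real) set \<Rightarrow> (real \<times> real \<Rightarrow> real)
      \<Rightarrow> (real \<times> real \<Rightarrow> real) \<Rightarrow> (real \<times> real \<Rightarrow> real) \<Rightarrow> bool" where
  "W12_2d U w G1 G2 \<longleftrightarrow>
     w \<in> borel_measurable lebesgue \<and> G1 \<in> borel_measurable lebesgue \<and>
     G2 \<in> borel_measurable lebesgue \<and>
     set_integrable lebesgue U (\<lambda>z. (w z)\<^sup>2) \<and>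
     set_integrable lebesgue U (\<lambda>z. (G1 z)\<^sup>2) \<and>
     set_integrable lebesgue U (\<lambda>z. (G2 z)\<^sup>2) \<and>
     (\<forall>\<phi> p1 p2. test_fun U \<phi> p1 p2 \<longrightarrow>
        (LINT z:U|lebesgue. w z * p1 z) = - (LINT z:U|lebesgue. G1 z * \<phi> z) \<and>
        (LINT z:U|lebesgue. w z * p2 z) = - (LINT z:U|lebesgue. G2 z * \<phi> z))"

text \<open>W^{1,2}_mu(B_1^+): trace mu on the flat part, trace <= 1-gamma on the arc.  Traces are
  expressed through limits along vertical (resp. radial) segments, valid for a.e. line.\<close>
definition W12_mu :: "real \<Rightarrow> (real \<Rightarrow> real)
      \<Rightarrow> ((real \<times> real \<Rightarrow> real) \<times> (real \<times> real \<Rightarrow> real) \<times> (real \<times> real \<Rightarrow> real)) set" where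
  "W12_mu \<gamma> \<mu> = {(w, G1, G2). W12_2d half_disk w G1 G2 \<and>
     (AE x in lborel. x \<in> {-1<..<1} \<longrightarrow>
        ((\<lambda>t. w (x, t)) \<longlongrightarrow> \<mu> x) (at_right 0)) \<and>
     (AE \<theta> in lborel. \<theta> \<in> {0<..<pi} \<longrightarrow>
        (\<exists>L. ((\<lambda>r. w (r * cos \<theta>, r * sin \<theta>)) \<longlongrightarrow> L) (at_left 1) \<and> L \<le> 1 - \<gamma>))}"

definition energy :: "real \<Rightarrow> real \<Rightarrow> (real \<Rightarrow> real) \<Rightarrow> ennreal" where
  "energy \<gamma> \<epsilon> \<mu> =
     ennreal (\<epsilon> / 2) *
       (INF g\<in>{g. W12_interval \<mu> g}.
          \<integral>\<^sup>+ x\<in>{-1<..<1}. ennreal ((g x)\<^sup>2 / (1 - (\<mu> x)\<^sup>2)) \<partial>lborel)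
     + ennreal (1 / 2) *
       (INF (w, G1, G2)\<in>W12_mu \<gamma> \<mu>.
          \<integral>\<^sup>+ z\<in>half_disk. ennreal ((G1 z)\<^sup>2 + (G2 z)\<^sup>2) \<partial>lebesgue)"

end

theory Submission
  imports Defs
begin

text \<open>The competitor is \<open>\<mu> x = f \<bar>x\<bar>\<close> for a profile \<open>f\<close> that equals \<open>1\<close> near \<open>0\<close>, bends
  quadratically in \<open>log r\<close> on \<open>[a, e a]\<close> and then decays like the harmonic function
  \<open>1 - \<gamma> + m log (1/r)\<close> to \<open>1 - \<gamma>\<close> at \<open>r = 1\<close>.  Its radial extension \<open>f (norm z)\<close> to the half
  disk has Dirichlet energy at most \<open>\<pi> m\<^sup>2 log (1/a)\<close>, and the weighted one-dimensional term
  is \<open>O (m / (\<beta> a))\<close> because \<open>1 - \<mu>\<^sup>2 \<ge> \<beta> (1 - \<mu>)\<close>.  With \<open>a = \<delta> / e\<close> and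
  \<open>m = \<gamma> / (log (1/\<delta>) + 1/2)\<close> the first part gives the leading term
  \<open>\<pi> \<gamma>\<^sup>2 / (2 log (1/\<delta>))\<close>, and the second is \<open>O (\<epsilon> / \<delta>) / log (1/\<delta>)\<close>, which is
  \<open>O (1 / log\<^sup>2 (1/\<delta>))\<close> since \<open>\<epsilon> / \<delta> = 1 / log (1/\<epsilon>)\<close>.\<close>

section \<open>Integrals of derivatives\<close>

lemma nn_integral_FTC_atLeastAtMost:
  fixes f F :: "real \<Rightarrow> real"
  assumes ab: "a \<le> b"
    and F: "\<And>x. a \<le> x \<Longrightarrow> x \<le> b \<Longrightarrow> (F has_real_derivative f x) (at x)"
    and f: "continuous_on {a..b} f"
    and nonneg: "\<And>x. a \<le> x \<Longrightarrow> x \<le> b \<Longrightarrow> 0 \<le> f x"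
  shows "(\<integral>\<^sup>+x. ennreal (f x) * indicator {a..b} x \<partial>lborel) = ennreal (F b - F a)"
proof -
  have int: "integrable lborel (\<lambda>x. indicator {a..b} x *\<^sub>R f x)"
    using borel_integrable_atLeastAtMost'[OF f] unfolding set_integrable_def .
  have "integral\<^sup>L lborel (\<lambda>x. indicator {a..b} x *\<^sub>R f x) = F b - F a"
    using F by (intro integral_FTC_atLeastAtMost[OF ab _ f])
      (simp add: has_real_derivative_iff_has_vector_derivative[symmetric] has_field_derivative_at_within)
  then have "(\<integral>\<^sup>+x. ennreal (indicator {a..b} x *\<^sub>R f x) \<partial>lborel) = ennreal (F b - F a)"
    using nn_integral_eq_integral[OF int] nonneg by (auto simp: indicator_def)
  moreover have "\<And>x. ennreal (indicator {a..b} x *\<^sub>R f x) = ennreal (f x) * indicator {a..b} x"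
    by (auto simp: indicator_def)
  ultimately show ?thesis by simp
qed

lemma integral_lborel_deriv_eq_0:
  fixes F F' :: "real \<Rightarrow> real"
  assumes F: "\<And>x. (F has_real_derivative F' x) (at x)"
    and F': "continuous_on UNIV F'"
    and vanish: "\<And>x. R < \<bar>x\<bar> \<Longrightarrow> F x = 0 \<and> F' x = 0"
    and "0 \<le> R"
  shows "integral\<^sup>L lborel F' = 0"
proof -
  have "F' = (\<lambda>x. indicator {-(R+1)..R+1} x *\<^sub>R F' x)"
    using vanish by (force simp: indicator_def abs_le_iff)
  moreover have "integral\<^sup>L lborel (\<lambda>x. indicator {-(R+1)..R+1} x *\<^sub>R F' x) = F (R+1) - F (-(R+1))"
    using \<open>0 \<le> R\<close> F F' by (intro integral_FTC_atLeastAtMost)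
      (auto simp: has_real_derivative_iff_has_vector_derivative[symmetric]
        has_field_derivative_at_within intro: continuous_on_subset)
  moreover have "F (R+1) = 0" "F (-(R+1)) = 0"
    using vanish[of "R+1"] vanish[of "-(R+1)"] \<open>0 \<le> R\<close> by auto
  ultimately show ?thesis by simp
qed

lemma integrable_lborel_compact_support:
  fixes F :: "'a::euclidean_space \<Rightarrow> real"
  assumes "continuous_on UNIV F" "compact K" "\<And>z. z \<notin> K \<Longrightarrow> F z = 0"
  shows "integrable lborel F"
proof -
  have "integrable lborel (\<lambda>z. indicator K z *\<^sub>R F z)"
    using assms by (intro borel_integrable_compact) (auto intro: continuous_on_subset)
  moreover have "(\<lambda>z. indicator K z *\<^sub>R F z) = F"
    using assms(3) by (intro ext) (auto simp: indicator_def)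
  ultimately show ?thesis by simp
qed

lemma set_lebesgue_integral_eq_integral_lborel:
  fixes F :: "'a::euclidean_space \<Rightarrow> real"
  assumes "continuous_on UNIV F" "K \<subseteq> U" "\<And>z. z \<notin> K \<Longrightarrow> F z = 0"
  shows "(LINT z:U|lebesgue. F z) = integral\<^sup>L lborel F"
proof -
  have "(\<lambda>z. indicator U z *\<^sub>R F z) = F"
    using assms(2,3) by (intro ext) (auto simp: indicator_def)
  then have "(LINT z:U|lebesgue. F z) = integral\<^sup>L lebesgue F"
    by (simp add: set_lebesgue_integral_def)
  also have "\<dots> = integral\<^sup>L lborel F"
    using assms(1) by (intro integral_completion) (simp add: borel_measurable_continuous_onI)
  finally show ?thesis .
qed

text \<open>Fubini reduces the plane integral of each partial derivative to integrals along lines,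
  which vanish by the fundamental theorem of calculus.\<close>
lemma integral_lborel_partial_derivatives_eq_0:
  fixes h D1 D2 :: "real \<times> real \<Rightarrow> real"
  assumes h: "\<And>z. (h has_derivative (\<lambda>k. D1 z * fst k + D2 z * snd k)) (at z)"
    and D1: "continuous_on UNIV D1" and D2: "continuous_on UNIV D2"
    and K: "compact K" and vanish: "\<And>z. z \<notin> K \<Longrightarrow> h z = 0 \<and> D1 z = 0 \<and> D2 z = 0"
  shows "integral\<^sup>L lborel D1 = 0" and "integral\<^sup>L lborel D2 = 0"
proof -
  obtain R0 where "\<forall>z\<in>K. norm z \<le> R0"
    using compact_imp_bounded[OF K] unfolding bounded_iff by blast
  then obtain R where R: "0 \<le> R" "K \<subseteq> cball 0 R"
    by (intro that[of "max R0 0"]) auto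
  have outside: "(x, y) \<notin> K" if "R < \<bar>x\<bar> \<or> R < \<bar>y\<bar>" for x y
  proof
    assume "(x, y) \<in> K"
    then have "norm (x, y) \<le> R" using R(2) by auto
    moreover have "\<bar>x\<bar> \<le> norm (x, y)" "\<bar>y\<bar> \<le> norm (x, y)"
      using norm_fst_le[of x y] norm_snd_le[of y x] by auto
    ultimately show False using that by linarith
  qed
  have dx: "((\<lambda>x. h (x, y)) has_real_derivative D1 (x, y)) (at x)" for x y
  proof -
    have "((\<lambda>x. (x, y)) has_derivative (\<lambda>k. (k, 0))) (at x)"
      by (auto intro!: derivative_eq_intros)
    from has_derivative_compose[OF this h]
    have "((\<lambda>x. h (x, y)) has_derivative (\<lambda>k. k * D1 (x, y))) (at x)"
      by (simp add: algebra_simps)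
    then show ?thesis by (simp add: has_field_derivative_def mult_commute_abs)
  qed
  have dy: "((\<lambda>y. h (x, y)) has_real_derivative D2 (x, y)) (at y)" for x y
  proof -
    have "((\<lambda>y. (x, y)) has_derivative (\<lambda>k. (0, k))) (at y)"
      by (auto intro!: derivative_eq_intros)
    from has_derivative_compose[OF this h]
    have "((\<lambda>y. h (x, y)) has_derivative (\<lambda>k. k * D2 (x, y))) (at y)"
      by (simp add: algebra_simps)
    then show ?thesis by (simp add: has_field_derivative_def mult_commute_abs)
  qed
  have line1: "integral\<^sup>L lborel (\<lambda>x. D1 (x, y)) = 0" for y
    using outside vanish
    by (intro integral_lborel_deriv_eq_0[OF dx _ _ R(1)] continuous_on_compose2[OF D1])
      (auto intro!: continuous_intros)
  have line2: "integral\<^sup>L lborel (\<lambda>y. D2 (x, y)) = 0" for x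
    using outside vanish
    by (intro integral_lborel_deriv_eq_0[OF dy _ _ R(1)] continuous_on_compose2[OF D2])
      (auto intro!: continuous_intros)
  have "integrable (lborel \<Otimes>\<^sub>M lborel) D1" "integrable (lborel \<Otimes>\<^sub>M lborel) D2"
    using integrable_lborel_compact_support[OF _ K] D1 D2 vanish by (auto simp: lborel_prod)
  then have "integral\<^sup>L lborel D1 = (\<integral>y. (\<integral>x. D1 (x, y) \<partial>lborel) \<partial>lborel)"
      and "integral\<^sup>L lborel D2 = (\<integral>x. (\<integral>y. D2 (x, y) \<partial>lborel) \<partial>lborel)"
    using lborel_pair.integral_snd[of "\<lambda>x y. D1 (x, y)"] lborel_pair.integral_fst'[of D2]
    by (simp_all add: lborel_prod)
  then show "integral\<^sup>L lborel D1 = 0" and "integral\<^sup>L lborel D2 = 0"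
    using line1 line2 by simp_all
qed

lemma test_fun_partials_vanish:
  assumes "test_fun U \<phi> p1 p2" "compact K" "\<And>z. z \<notin> K \<Longrightarrow> \<phi> z = 0" "z \<notin> K"
  shows "p1 z = 0 \<and> p2 z = 0"
proof -
  have "(\<phi> has_derivative (\<lambda>h. p1 z * fst h + p2 z * snd h)) (at z)"
    using assms(1) unfolding test_fun_def by blast
  moreover have "open (- K)"
    using assms(2) compact_imp_closed by blast
  then have "(\<phi> has_derivative (\<lambda>h. 0)) (at z)"
    by (rule has_derivative_transform_within_open[OF has_derivative_const]) (use assms(3,4) in auto)
  ultimately have "(\<lambda>h. p1 z * fst h + p2 z * snd h) = (\<lambda>h. 0)"
    by (rule has_derivative_unique)
  from fun_cong[OF this, of "(1,0)"] fun_cong[OF this, of "(0,1)"] show ?thesis by simp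
qed

text \<open>Integrate the product rule for \<open>w \<phi>\<close>.\<close>
lemma C1_weak_partial_derivatives:
  fixes w W1 W2 :: "real \<times> real \<Rightarrow> real"
  assumes w: "\<And>z. (w has_derivative (\<lambda>h. W1 z * fst h + W2 z * snd h)) (at z)"
    and W1: "continuous_on UNIV W1" and W2: "continuous_on UNIV W2"
    and \<phi>: "test_fun U \<phi> p1 p2"
  shows "(LINT z:U|lebesgue. w z * p1 z) = - (LINT z:U|lebesgue. W1 z * \<phi> z) \<and>
         (LINT z:U|lebesgue. w z * p2 z) = - (LINT z:U|lebesgue. W2 z * \<phi> z)"
proof -
  obtain K where K: "compact K" "K \<subseteq> U" "\<And>z. z \<notin> K \<Longrightarrow> \<phi> z = 0"
    using \<phi> unfolding test_fun_def by blast
  have d\<phi>: "\<And>z. (\<phi> has_derivative (\<lambda>h. p1 z * fst h + p2 z * snd h)) (at z)"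
    and p1: "continuous_on UNIV p1" and p2: "continuous_on UNIV p2"
    using \<phi> unfolding test_fun_def by blast+
  have p_vanish: "\<And>z. z \<notin> K \<Longrightarrow> p1 z = 0 \<and> p2 z = 0"
    using test_fun_partials_vanish[OF \<phi> K(1) K(3)] by blast
  have cw: "continuous_on UNIV w" and c\<phi>: "continuous_on UNIV \<phi>"
    using has_derivative_continuous[OF w] has_derivative_continuous[OF d\<phi>]
    by (auto intro: continuous_at_imp_continuous_on)
  have prod: "((\<lambda>z. w z * \<phi> z) has_derivative (\<lambda>k. (w z * p1 z + W1 z * \<phi> z) * fst k
      + (w z * p2 z + W2 z * \<phi> z) * snd k)) (at z)" for z
    by (rule has_derivative_eq_rhs[OF has_derivative_mult[OF w d\<phi>]]) (simp add: fun_eq_iff algebra_simps)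
  have D: "continuous_on UNIV (\<lambda>z. w z * p1 z + W1 z * \<phi> z)"
    "continuous_on UNIV (\<lambda>z. w z * p2 z + W2 z * \<phi> z)"
    by (intro continuous_intros cw c\<phi> p1 p2 W1 W2)+
  have "\<And>z. z \<notin> K \<Longrightarrow> w z * \<phi> z = 0 \<and> w z * p1 z + W1 z * \<phi> z = 0 \<and> w z * p2 z + W2 z * \<phi> z = 0"
    using K(3) p_vanish by simp
  note parts = integral_lborel_partial_derivatives_eq_0[OF prod D K(1) this]
  note integrable = integrable_lborel_compact_support[OF _ K(1)]
  have int: "integrable lborel (\<lambda>z. w z * p1 z)" "integrable lborel (\<lambda>z. w z * p2 z)"
    "integrable lborel (\<lambda>z. W1 z * \<phi> z)" "integrable lborel (\<lambda>z. W2 z * \<phi> z)"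
    by (rule integrable; auto intro!: continuous_intros cw c\<phi> p1 p2 W1 W2 simp: p_vanish K(3))+
  have "integral\<^sup>L lborel (\<lambda>z. w z * p1 z) + integral\<^sup>L lborel (\<lambda>z. W1 z * \<phi> z) = 0"
       "integral\<^sup>L lborel (\<lambda>z. w z * p2 z) + integral\<^sup>L lborel (\<lambda>z. W2 z * \<phi> z) = 0"
    using parts Bochner_Integration.integral_add[OF int(1,3)] Bochner_Integration.integral_add[OF int(2,4)]
    by simp_all
  moreover have "(LINT z:U|lebesgue. w z * p1 z) = integral\<^sup>L lborel (\<lambda>z. w z * p1 z)"
    "(LINT z:U|lebesgue. w z * p2 z) = integral\<^sup>L lborel (\<lambda>z. w z * p2 z)"
    "(LINT z:U|lebesgue. W1 z * \<phi> z) = integral\<^sup>L lborel (\<lambda>z. W1 z * \<phi> z)"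
    "(LINT z:U|lebesgue. W2 z * \<phi> z) = integral\<^sup>L lborel (\<lambda>z. W2 z * \<phi> z)"
    by (rule set_lebesgue_integral_eq_integral_lborel[OF _ K(2)];
        auto intro!: continuous_intros cw c\<phi> p1 p2 W1 W2 simp: p_vanish K(3))+
  ultimately show ?thesis by linarith
qed

section \<open>Lebesgue measure on the upper half disk\<close>

lemma lborel_distr_reflect_snd:
  "distr lborel borel (\<lambda>(x, y). (x, - y)) = (lborel :: (real \<times> real) measure)"
proof -
  have "distr lborel borel (\<lambda>x::real. x) \<Otimes>\<^sub>M distr lborel borel (uminus :: real \<Rightarrow> real)
        = distr (lborel \<Otimes>\<^sub>M lborel) (borel \<Otimes>\<^sub>M borel) (\<lambda>(x, y). (x, - y))"
    by (rule pair_measure_distr) (auto simp: lborel_distr_uminus intro: lborel.sigma_finite_measure_axioms)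
  moreover have "distr lborel borel (\<lambda>x::real. x) = lborel"
    by (rule distr_id2) simp
  ultimately show ?thesis
    by (simp add: lborel_distr_uminus lborel_prod borel_prod)
qed

lemma null_sets_lborel_x_axis: "{z::real \<times> real. snd z = 0} \<in> null_sets lborel"
proof -
  have "{z::real \<times> real. snd z = 0} = UNIV \<times> {0}" by auto
  moreover have "emeasure (lborel \<Otimes>\<^sub>M lborel) (UNIV \<times> {0::real}) = 0"
    by (subst lborel.emeasure_pair_measure_Times) auto
  moreover have "closed (UNIV \<times> {0::real})" by (intro closed_Times) auto
  ultimately show ?thesis by (simp add: lborel_prod[symmetric] null_sets_def borel_closed)
qed

lemma emeasure_lborel_upper_half:
  assumes S: "S \<in> sets (borel :: (real \<times> real) measure)"
    and sym: "\<And>x y. (x, y) \<in> S \<longleftrightarrow> (x, - y) \<in> S"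
  shows "emeasure lborel S = 2 * emeasure lborel (S \<inter> {z. 0 < snd z})"
proof -
  let ?P = "S \<inter> {z. 0 < snd z}" and ?N = "S \<inter> {z. snd z < 0}" and ?Z = "S \<inter> {z. snd z = 0}"
  have "open {z::real \<times> real. 0 < snd z}" "open {z::real \<times> real. snd z < 0}"
    "closed {z::real \<times> real. snd z = 0}"
    by (intro open_Collect_less closed_Collect_eq continuous_intros)+
  then have sets: "?P \<in> sets lborel" "?N \<in> sets lborel" "?Z \<in> sets lborel"
    using S by (simp_all add: borel_open borel_closed sets.Int)
  have "emeasure lborel ?Z = 0"
    using null_sets_lborel_x_axis sets(3) by (metis Int_lower2 null_sets_subset null_setsD1)
  have reflect: "(\<lambda>(x, y). (x, - y)) \<in> borel_measurable (borel :: (real \<times> real) measure)"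
    unfolding case_prod_beta' by (intro borel_measurable_continuous_onI continuous_intros)
  have "(\<lambda>(x, y). (x, - y)) -` ?P \<inter> space lborel = ?N"
    using sym by auto
  then have "emeasure lborel ?N = emeasure (distr lborel borel (\<lambda>(x, y). (x, - y))) ?P"
    using reflect sets(1) by (subst emeasure_distr) auto
  then have "emeasure lborel ?N = emeasure lborel ?P"
    by (simp add: lborel_distr_reflect_snd)
  moreover have "emeasure lborel ((?P \<union> ?N) \<union> ?Z) = emeasure lborel (?P \<union> ?N) + emeasure lborel ?Z"
    using sets by (intro plus_emeasure[symmetric]) auto
  moreover have "(?P \<union> ?N) \<union> ?Z = S" by auto
  moreover have "emeasure lborel (?P \<union> ?N) = emeasure lborel ?P + emeasure lborel ?N"
    using sets by (intro plus_emeasure[symmetric]) auto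
  ultimately show ?thesis
    using \<open>emeasure lborel ?Z = 0\<close> by (simp add: mult_2)
qed

lemma emeasure_upper_half_ball:
  assumes "0 \<le> r"
  shows "emeasure lborel (ball (0::real \<times> real) r \<inter> {z. 0 < snd z}) = ennreal (pi * r\<^sup>2 / 2)"
    and "emeasure lborel (cball (0::real \<times> real) r \<inter> {z. 0 < snd z}) = ennreal (pi * r\<^sup>2 / 2)"
proof -
  have halve: "emeasure lborel (S \<inter> {z. 0 < snd z}) = ennreal (pi * r\<^sup>2 / 2)"
    if "S \<in> sets borel" "\<And>x y. (x, y) \<in> S \<longleftrightarrow> (x, - y) \<in> S"
      and "emeasure lborel S = ennreal (pi * r\<^sup>2)" for S :: "(real \<times> real) set"
  proof -
    have "ennreal (pi * r\<^sup>2) = ennreal 2 * ennreal (pi * r\<^sup>2 / 2)"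
      by (rule trans[OF _ ennreal_mult]) auto
    then have "2 * emeasure lborel (S \<inter> {z. 0 < snd z}) = 2 * ennreal (pi * r\<^sup>2 / 2)"
      using emeasure_lborel_upper_half[OF that(1,2)] that(3) by simp
    then show ?thesis by (simp add: ennreal_mult_cancel_left)
  qed
  show "emeasure lborel (ball (0::real \<times> real) r \<inter> {z. 0 < snd z}) = ennreal (pi * r\<^sup>2 / 2)"
    using emeasure_ball[OF assms, of "0::real \<times> real"]
    by (intro halve) (auto simp: norm_Pair unit_ball_vol_2 power2_eq_square)
  show "emeasure lborel (cball (0::real \<times> real) r \<inter> {z. 0 < snd z}) = ennreal (pi * r\<^sup>2 / 2)"
    using emeasure_cball[OF assms, of "0::real \<times> real"]
    by (intro halve) (auto simp: norm_Pair unit_ball_vol_2 power2_eq_square)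
qed

lemma half_disk_eq: "half_disk = ball (0::real \<times> real) 1 \<inter> {z. 0 < snd z}"
  by (auto simp: half_disk_def norm_Pair)

lemma open_half_disk: "open half_disk"
  unfolding half_disk_eq by (intro open_Int open_Collect_less continuous_intros open_ball)

lemma emeasure_half_disk: "emeasure lborel half_disk = ennreal (pi / 2)"
  using emeasure_upper_half_ball(1)[of 1] unfolding half_disk_eq by simp

lemma half_disk_outside_radius:
  "half_disk \<inter> {z. x < norm z} = half_disk - (half_disk \<inter> cball 0 (max 0 (min 1 x)))"
proof -
  have "x < norm z \<longleftrightarrow> \<not> norm z \<le> max 0 (min 1 x)" if "z \<in> half_disk" for z :: "real \<times> real"
  proof -
    have "0 < norm z" "norm z < 1" using that by (auto simp: half_disk_eq)
    then show ?thesis by (auto simp: max_def min_def simp del: zero_less_norm_iff)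
  qed
  then show ?thesis by auto
qed

lemma emeasure_half_disk_Int_cball:
  assumes "0 \<le> c" "c \<le> 1"
  shows "emeasure lborel (half_disk \<inter> cball 0 c) = ennreal (pi * c\<^sup>2 / 2)"
proof -
  have upper: "{z::real \<times> real. 0 < snd z} \<in> sets borel"
    by (intro borel_open open_Collect_less continuous_intros)
  have upper_cball: "cball (0::real \<times> real) c \<inter> {z. 0 < snd z} \<in> sets borel"
    using sets.Int[OF borel_closed[OF closed_cball[of "0::real \<times> real" c]] upper] by simp
  show ?thesis
  proof (rule antisym)
    show "emeasure lborel (half_disk \<inter> cball 0 c) \<le> ennreal (pi * c\<^sup>2 / 2)"
    proof -
      have "half_disk \<inter> cball 0 c \<subseteq> cball 0 c \<inter> {z. 0 < snd z}"
        unfolding half_disk_eq by auto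
      then show ?thesis
        using emeasure_mono upper_cball emeasure_upper_half_ball(2)[OF assms(1)] by (metis sets_lborel)
    qed
    show "ennreal (pi * c\<^sup>2 / 2) \<le> emeasure lborel (half_disk \<inter> cball 0 c)"
    proof -
      have "ball 0 c \<inter> {z. 0 < snd z} \<subseteq> half_disk \<inter> cball 0 c"
        using assms(2) unfolding half_disk_eq by auto
      moreover have "half_disk \<inter> cball 0 c \<in> sets lborel"
        using open_half_disk by simp
      ultimately show ?thesis
        using emeasure_mono emeasure_upper_half_ball(1)[OF assms(1)] by metis
    qed
  qed
qed

text \<open>Both measures give the tail \<open>{x<..}\<close> the mass \<open>\<pi> (1 - c\<^sup>2) / 2\<close>, where \<open>c\<close> is \<open>x\<close>
  clamped to \<open>[0, 1]\<close>.\<close>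
lemma distr_norm_half_disk:
  "distr (density lborel (indicator half_disk)) borel (norm :: real \<times> real \<Rightarrow> real)
     = density lborel (\<lambda>r. ennreal (pi * r) * indicator {0..1} r)"
proof (rule measure_eqI_lessThan)
  let ?H = "half_disk" and ?g = "\<lambda>r::real. ennreal (pi * r) * indicator {0..1} r"
  have H: "?H \<in> sets lborel" using open_half_disk by simp
  have tail: "emeasure (distr (density lborel (indicator ?H)) borel norm) {x<..}
      = emeasure lborel (?H \<inter> {z. x < norm z})" for x
  proof -
    have "open {z::real \<times> real. x < norm z}" by (intro open_Collect_less continuous_intros)
    moreover have "norm -` {x<..} \<inter> space (density lborel (indicator ?H)) = {z::real \<times> real. x < norm z}"
      by auto
    ultimately show ?thesis
      using H by (subst emeasure_distr) (auto intro!: emeasure_restricted)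
  qed
  show "sets (distr (density lborel (indicator ?H)) borel (norm :: real \<times> real \<Rightarrow> real)) = sets borel"
    "sets (density lborel ?g) = sets borel" by simp_all
  show "emeasure (distr (density lborel (indicator ?H)) borel norm) {x<..} < \<infinity>" for x
    using emeasure_mono[of "?H \<inter> {z. x < norm z}" ?H lborel] H
    unfolding tail emeasure_half_disk by (auto simp: le_less_trans)
  fix x :: real
  define c where "c = max 0 (min 1 x)"
  have c: "0 \<le> c" "c \<le> 1" by (auto simp: c_def)
  have "emeasure lborel (?H \<inter> {z. x < norm z}) = ennreal (pi / 2) - ennreal (pi * c\<^sup>2 / 2)"
    unfolding half_disk_outside_radius c_def[symmetric]
    using H emeasure_half_disk emeasure_half_disk_Int_cball[OF c] by (subst emeasure_Diff) auto
  also have "\<dots> = ennreal (pi * 1\<^sup>2 / 2 - pi * c\<^sup>2 / 2)"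
    using c by (simp add: ennreal_minus power_le_one)
  also have "\<dots> = (\<integral>\<^sup>+ r. ennreal (pi * r) * indicator {c..1} r \<partial>lborel)"
    using c by (intro nn_integral_FTC_atLeastAtMost[symmetric])
      (auto intro!: derivative_eq_intros continuous_intros)
  also have "\<dots> = (\<integral>\<^sup>+ r. ?g r * indicator {x<..} r \<partial>lborel)"
    using AE_lborel_singleton[of c]
    by (intro nn_integral_cong_AE, eventually_elim) (auto simp: c_def indicator_def)
  also have "\<dots> = emeasure (density lborel ?g) {x<..}"
    by (rule emeasure_density[symmetric]) auto
  finally show "emeasure (distr (density lborel (indicator ?H)) borel norm) {x<..}
      = emeasure (density lborel ?g) {x<..}" unfolding tail .
qed

lemma nn_integral_half_disk_radial:
  fixes F :: "real \<Rightarrow> ennreal"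
  assumes F: "F \<in> borel_measurable borel"
  shows "(\<integral>\<^sup>+ z. F (norm z) * indicator half_disk z \<partial>lborel)
       = (\<integral>\<^sup>+ r. ennreal (pi * r) * indicator {0..1} r * F r \<partial>lborel)"
proof -
  have H: "indicator half_disk \<in> borel_measurable (lborel :: (real \<times> real) measure)"
    using open_half_disk by simp
  have norm: "norm \<in> borel_measurable (borel :: (real \<times> real) measure)"
    by (simp add: borel_measurable_continuous_onI continuous_on_norm_id)
  have "(\<integral>\<^sup>+ z. F (norm z) * indicator half_disk z \<partial>lborel) =
        integral\<^sup>N (density lborel (indicator half_disk)) (\<lambda>z::real \<times> real. F (norm z))"
    using F norm by (subst nn_integral_density[OF H]) (auto simp: mult.commute)
  also have "\<dots> = integral\<^sup>N (distr (density lborel (indicator half_disk)) borel (norm :: real \<times> real \<Rightarrow> real)) F"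
    using F norm by (intro nn_integral_distr[symmetric]) auto
  also have "\<dots> = (\<integral>\<^sup>+ r. ennreal (pi * r) * indicator {0..1} r * F r \<partial>lborel)"
    using F by (simp add: distr_norm_half_disk nn_integral_density)
  finally show ?thesis .
qed

lemma set_integrable_half_disk_continuous:
  fixes F :: "real \<times> real \<Rightarrow> real"
  assumes "continuous_on UNIV F"
  shows "set_integrable lebesgue half_disk F"
proof -
  have "set_integrable lborel (cball 0 1) F"
    unfolding set_integrable_def using assms
    by (intro borel_integrable_compact) (auto intro: continuous_on_subset)
  then have "set_integrable lborel half_disk F"
    by (rule set_integrable_subset) (auto simp: half_disk_eq open_half_disk[unfolded half_disk_eq])
  moreover have "(\<lambda>z. indicator half_disk z *\<^sub>R F z) \<in> borel_measurable lborel"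
    using open_half_disk assms
    by (intro borel_measurable_scaleR borel_measurable_indicator) (auto simp: borel_measurable_continuous_onI)
  ultimately show ?thesis
    unfolding set_integrable_def by (simp add: integrable_completion)
qed

section \<open>The logarithmic profile\<close>

lemma has_real_derivative_if_le:
  fixes A B :: "real \<Rightarrow> real"
  assumes "x \<le> c \<Longrightarrow> (A has_real_derivative DA) (at x)"
      and "c \<le> x \<Longrightarrow> (B has_real_derivative DB) (at x)"
      and "x = c \<Longrightarrow> A c = B c \<and> DA = DB"
  shows "((\<lambda>r. if r \<le> c then A r else B r) has_real_derivative (if x \<le> c then DA else DB)) (at x)"
proof -
  have "((\<lambda>r. if r \<in> {..c} then A r else B r) has_derivative
      (if x \<in> {..c} then (*) DA else (*) DB)) (at x within {..c} \<union> {c<..})"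
    by (rule has_derivative_If_within_closures[where f' = "\<lambda>_. (*) DA" and g' = "\<lambda>_. (*) DB"])
      (use assms in \<open>auto intro: has_derivative_at_withinI simp: has_field_derivative_def\<close>)
  moreover have "{..c} \<union> {c<..} = (UNIV :: real set)" by auto
  ultimately show ?thesis
    by (simp add: has_field_derivative_def if_distrib[of "(*)"])
qed

locale log_profile =
  fixes a m \<gamma> \<beta> :: real
  assumes a_pos: "0 < a" and exp_1_a_lt_1: "exp 1 * a < 1"
    and m_pos: "0 < m" and \<gamma>_eq: "\<gamma> = m * (ln (1/a) - 1/2)"
    and \<beta>_pos: "0 < \<beta>" and \<beta>_lt_\<gamma>: "\<beta> < \<gamma>" and \<gamma>_lt: "\<gamma> < 2 - \<beta>"
begin

definition b :: real where "b = exp 1 * a"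

text \<open>With \<open>b = e a\<close> the two logarithmic pieces of \<open>f\<close> have the same slope at \<open>b\<close>, and the
  assumption on \<open>\<gamma>\<close> makes their values agree there.\<close>
definition f :: "real \<Rightarrow> real" where
  "f r = (if r \<le> a then 1 else if r \<le> b then 1 - m/2 * (ln (r/a))\<^sup>2 else 1 - \<gamma> + m * ln (1/r))"

definition f' :: "real \<Rightarrow> real" where
  "f' r = (if r \<le> a then 0 else if r \<le> b then - m * ln (r/a) / r else - m / r)"

definition F1 :: "real \<Rightarrow> real" where
  "F1 r = (if r \<le> a then 0 else if r \<le> b then - m * ln (r/a) / r\<^sup>2 else - m / r\<^sup>2)"

lemma b_pos: "0 < b" and a_lt_b: "a < b" and b_lt_1: "b < 1"
  using a_pos exp_1_a_lt_1 by (auto simp: b_def)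

lemma ln_b_div_a: "ln (b / a) = 1"
  using a_pos by (simp add: b_def)

lemma ln_inverse_b: "ln (1/b) = ln (1/a) - 1"
  using a_pos by (simp add: b_def ln_div ln_mult)

lemma one_lt_ln_inverse_a: "1 < ln (1/a)"
proof -
  have "exp 1 < 1/a" using exp_1_a_lt_1 a_pos by (simp add: field_simps)
  then have "ln (exp 1) < ln (1/a)" using a_pos by (subst ln_less_cancel_iff) auto
  then show ?thesis by simp
qed

lemma half_m_lt_\<gamma>: "m/2 < \<gamma>"
  using one_lt_ln_inverse_a m_pos unfolding \<gamma>_eq by (simp add: algebra_simps)

lemma f_has_real_derivative: "(f has_real_derivative f' x) (at x)"
proof -
  have outer: "((\<lambda>r. if r \<le> b then 1 - m/2 * (ln (r/a))\<^sup>2 else 1 - \<gamma> + m * ln (1/r))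
       has_real_derivative (if x \<le> b then - m * ln (x/a) / x else - m / x)) (at x)" if "a \<le> x"
  proof (rule has_real_derivative_if_le)
    have x: "0 < x" using that a_pos by linarith
    show "((\<lambda>r. 1 - m/2 * (ln (r/a))\<^sup>2) has_real_derivative - m * ln (x/a) / x) (at x)"
      using x a_pos by (auto intro!: derivative_eq_intros simp: field_simps power2_eq_square)
    show "((\<lambda>r. 1 - \<gamma> + m * ln (1/r)) has_real_derivative - m / x) (at x)"
      using x by (auto intro!: derivative_eq_intros simp: field_simps power2_eq_square)
    have "1 - m/2 * (ln (b/a))\<^sup>2 = 1 - \<gamma> + m * ln (1/b)"
      unfolding ln_b_div_a ln_inverse_b \<gamma>_eq by (simp add: algebra_simps)
    then show "x = b \<Longrightarrow> 1 - m/2 * (ln (b/a))\<^sup>2 = 1 - \<gamma> + m * ln (1/b) \<and> - m * ln (x/a) / x = - m / x"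
      using ln_b_div_a by simp
  qed
  have "((\<lambda>r. if r \<le> a then 1 else (if r \<le> b then 1 - m/2 * (ln (r/a))\<^sup>2 else 1 - \<gamma> + m * ln (1/r)))
       has_real_derivative (if x \<le> a then 0 else (if x \<le> b then - m * ln (x/a) / x else - m / x))) (at x)"
    using a_lt_b a_pos by (intro has_real_derivative_if_le outer) simp_all
  then show ?thesis unfolding f_def[abs_def] f'_def by simp
qed

lemma continuous_on_F1: "continuous_on UNIV F1"
proof -
  have "continuous_on ({a..b} \<union> {b..}) (\<lambda>r. if r \<le> b then - m * ln (r/a) / r\<^sup>2 else - m / r\<^sup>2)"
    using a_pos b_pos ln_b_div_a by (intro continuous_on_If) (auto intro!: continuous_intros)
  moreover have "{a..b} \<union> {b..} = {a..}" using a_lt_b by auto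
  ultimately have "continuous_on ({..a} \<union> {a..})
      (\<lambda>r. if r \<le> a then 0 else if r \<le> b then - m * ln (r/a) / r\<^sup>2 else - m / r\<^sup>2)"
    using a_lt_b by (intro continuous_on_If) auto
  moreover have "{..a} \<union> {a..} = (UNIV :: real set)" by auto
  ultimately show ?thesis unfolding F1_def[abs_def] by simp
qed

lemma f'_eq: "f' r = r * F1 r"
  using a_pos unfolding f'_def F1_def by (auto simp: power2_eq_square field_simps)

lemma f_0: "f 0 = 1"
  using a_pos by (simp add: f_def)

lemma f_1: "f 1 = 1 - \<gamma>"
  using a_lt_b b_lt_1 a_pos by (simp add: f_def)

lemma f_inner: "r \<le> a \<Longrightarrow> f r = 1 \<and> f' r = 0"
  unfolding f_def f'_def by simp

lemma f_middle: "a < r \<Longrightarrow> r \<le> b \<Longrightarrow> f r = 1 - m/2 * (ln (r/a))\<^sup>2 \<and> f' r = - m * ln (r/a) / r"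
  unfolding f_def f'_def by simp

lemma f_outer: "b < r \<Longrightarrow> f r = 1 - \<gamma> + m * ln (1/r) \<and> f' r = - m / r"
  using a_lt_b unfolding f_def f'_def by simp

lemma ln_div_a_middle: "a < r \<Longrightarrow> r \<le> b \<Longrightarrow> 0 < ln (r/a) \<and> ln (r/a) \<le> 1"
proof -
  assume r: "a < r" "r \<le> b"
  have "1 < r/a" using r a_pos by (simp add: field_simps)
  moreover have "ln (r/a) \<le> ln (b/a)"
    using r a_pos by (subst ln_le_cancel_iff) (auto simp: divide_right_mono)
  ultimately show ?thesis using ln_b_div_a by simp
qed

lemma ln_inverse_outer: "b < r \<Longrightarrow> r \<le> 1 \<Longrightarrow> 0 \<le> ln (1/r) \<and> ln (1/r) \<le> ln (1/a) - 1"
proof -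
  assume r: "b < r" "r \<le> 1"
  then have "0 < r" using b_pos by linarith
  then have "0 \<le> ln (1/r)" "ln (1/r) \<le> ln (1/b)"
    using r b_pos by (simp_all add: ln_div)
  then show ?thesis using ln_inverse_b by simp
qed

lemma one_minus_f_outer: "b < r \<Longrightarrow> r \<le> 1 \<Longrightarrow> m/2 \<le> 1 - f r"
proof -
  assume r: "b < r" "r \<le> 1"
  have "m * ln (1/r) \<le> m * (ln (1/a) - 1)"
    using ln_inverse_outer[OF r] m_pos by (simp add: mult_left_mono)
  moreover have "m * (ln (1/a) - 1) = \<gamma> - m/2" unfolding \<gamma>_eq by (simp add: algebra_simps)
  ultimately show ?thesis using f_outer[OF r(1)] by linarith
qed

lemma f_bounds: "r \<le> 1 \<Longrightarrow> 1 - \<gamma> \<le> f r \<and> f r \<le> 1"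
proof -
  assume r: "r \<le> 1"
  consider "r \<le> a" | "a < r" "r \<le> b" | "b < r" by linarith
  then show ?thesis
  proof cases
    case 1
    then show ?thesis using f_inner \<beta>_lt_\<gamma> \<beta>_pos by simp
  next
    case 2
    have "(ln (r/a))\<^sup>2 \<le> 1"
      using ln_div_a_middle[OF 2] by (simp add: power_le_one)
    then have "m * (ln (r/a))\<^sup>2 \<le> 2 * \<gamma>"
      using half_m_lt_\<gamma> m_pos mult_left_le[of "(ln (r/a))\<^sup>2" m] by linarith
    then show ?thesis using f_middle[OF 2] ln_div_a_middle[OF 2] m_pos by simp
  next
    case 3
    have "0 \<le> m * ln (1/r)" using ln_inverse_outer[OF 3 r] m_pos by simp
    then show ?thesis using f_outer[OF 3] one_minus_f_outer[OF 3 r] m_pos by simp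
  qed
qed

lemma f'_sq_div_le:
  assumes "0 \<le> r" "r \<le> 1"
  shows "(f' r)\<^sup>2 / (1 - (f r)\<^sup>2) \<le> (if r \<le> a then 0 else 2 * m / (\<beta> * r\<^sup>2))"
proof -
  have \<beta>_le: "\<beta> \<le> 1 + f r" using f_bounds[OF assms(2)] \<gamma>_lt by linarith
  have factor: "1 - (f r)\<^sup>2 = (1 - f r) * (1 + f r)" by (simp add: algebra_simps power2_eq_square)
  consider "r \<le> a" | "a < r" "r \<le> b" | "b < r" by linarith
  then show ?thesis
  proof cases
    case 1
    then show ?thesis using f_inner by simp
  next
    case 2
    define l where "l = ln (r/a)"
    have l: "0 < l" "0 < r" using ln_div_a_middle[OF 2] 2 a_pos by (auto simp: l_def)
    have f: "1 - f r = m/2 * l\<^sup>2" "f' r = - m * l / r" using f_middle[OF 2] by (auto simp: l_def)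
    have "(m/2 * l\<^sup>2) * \<beta> \<le> 1 - (f r)\<^sup>2"
      unfolding factor f(1) using \<beta>_le m_pos l by (intro mult_left_mono) auto
    moreover have "0 < (m/2 * l\<^sup>2) * \<beta>" using m_pos l \<beta>_pos by simp
    ultimately have "(f' r)\<^sup>2 / (1 - (f r)\<^sup>2) \<le> (f' r)\<^sup>2 / ((m/2 * l\<^sup>2) * \<beta>)"
      by (intro divide_left_mono) auto
    also have "\<dots> = 2 * m / (\<beta> * r\<^sup>2)"
      unfolding f using m_pos l \<beta>_pos by (simp add: field_simps power2_eq_square)
    finally show ?thesis using 2 by simp
  next
    case 3
    have r: "0 < r" using 3 b_pos by linarith
    have "(m/2) * \<beta> \<le> 1 - (f r)\<^sup>2"
      unfolding factor using \<beta>_le one_minus_f_outer[OF 3 assms(2)] m_pos \<beta>_pos by (intro mult_mono) auto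
    moreover have "0 < (m/2) * \<beta>" using m_pos \<beta>_pos by simp
    ultimately have "(f' r)\<^sup>2 / (1 - (f r)\<^sup>2) \<le> (f' r)\<^sup>2 / ((m/2) * \<beta>)"
      by (intro divide_left_mono) auto
    also have "\<dots> = 2 * m / (\<beta> * r\<^sup>2)"
      using f_outer[OF 3] m_pos \<beta>_pos r by (simp add: field_simps power2_eq_square)
    finally show ?thesis using 3 a_lt_b by simp
  qed
qed

lemma f'_sq_le: "(f' r)\<^sup>2 \<le> (if r \<le> a then 0 else m\<^sup>2 / r\<^sup>2)"
proof -
  consider "r \<le> a" | "a < r" "r \<le> b" | "b < r" by linarith
  then show ?thesis
  proof cases
    case 1
    then show ?thesis using f_inner by simp
  next
    case 2
    have "(ln (r/a))\<^sup>2 \<le> 1" using ln_div_a_middle[OF 2] by (simp add: power_le_one)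
    then have "m\<^sup>2 / r\<^sup>2 * (ln (r/a))\<^sup>2 \<le> m\<^sup>2 / r\<^sup>2"
      by (intro mult_left_le) auto
    moreover have "(f' r)\<^sup>2 = m\<^sup>2 / r\<^sup>2 * (ln (r/a))\<^sup>2"
      using f_middle[OF 2] by (simp add: power2_eq_square field_simps)
    ultimately show ?thesis using 2 by simp
  next
    case 3
    then show ?thesis using f_outer[OF 3] a_lt_b by (simp add: power_divide)
  qed
qed

definition w :: "real \<times> real \<Rightarrow> real" where "w z = f (norm z)"
definition W1 :: "real \<times> real \<Rightarrow> real" where "W1 z = F1 (norm z) * fst z"
definition W2 :: "real \<times> real \<Rightarrow> real" where "W2 z = F1 (norm z) * snd z"

definition \<mu> :: "real \<Rightarrow> real" where "\<mu> x = w (x, 0)"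
definition g :: "real \<Rightarrow> real" where "g x = W1 (x, 0)"

lemma continuous_on_W1: "continuous_on UNIV W1"
  unfolding W1_def[abs_def]
  by (intro continuous_intros continuous_on_compose2[OF continuous_on_F1]) auto

lemma continuous_on_W2: "continuous_on UNIV W2"
  unfolding W2_def[abs_def]
  by (intro continuous_intros continuous_on_compose2[OF continuous_on_F1]) auto

lemma w_has_derivative: "(w has_derivative (\<lambda>h. W1 z * fst h + W2 z * snd h)) (at z)"
proof (cases "z = 0")
  case True
  have "(w has_derivative (\<lambda>h. 0)) (at z)"
  proof (rule has_derivative_transform_within_open[OF has_derivative_const, where s = "ball 0 a"])
    show "z \<in> ball 0 a" using True a_pos by simp
    show "\<And>x. x \<in> ball 0 a \<Longrightarrow> 1 = w x" by (auto simp: w_def f_def)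
  qed simp
  then show ?thesis using True by (simp add: W1_def W2_def)
next
  case False
  have "(norm has_derivative (\<lambda>h. inner h (sgn z))) (at z)"
    using has_derivative_norm[OF False] unfolding gderiv_def .
  from DERIV_compose_FDERIV[OF f_has_real_derivative this]
  have "(w has_derivative (\<lambda>h. inner h (sgn z) * f' (norm z))) (at z)"
    unfolding w_def[abs_def] .
  moreover have "(\<lambda>h. inner h (sgn z) * f' (norm z)) = (\<lambda>h. W1 z * fst h + W2 z * snd h)"
    using False unfolding f'_eq W1_def W2_def sgn_div_norm
    by (cases z) (auto simp: fun_eq_iff inner_Pair field_simps)
  ultimately show ?thesis by simp
qed

lemma continuous_on_w: "continuous_on UNIV w"
  using has_derivative_continuous[OF w_has_derivative] by (simp add: continuous_on_eq_continuous_at)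

lemma w_in_W12_mu: "(w, W1, W2) \<in> W12_mu \<gamma> \<mu>"
  unfolding W12_mu_def
proof (intro CollectI case_prodI conjI)
  have lebesgue_measurable: "F \<in> borel_measurable lebesgue" if "continuous_on UNIV F" for F :: "real \<times> real \<Rightarrow> real"
    using that by (intro measurable_completion) (simp add: borel_measurable_continuous_onI)
  show "W12_2d half_disk w W1 W2"
    unfolding W12_2d_def
    using C1_weak_partial_derivatives[OF w_has_derivative continuous_on_W1 continuous_on_W2]
    by (intro conjI allI impI lebesgue_measurable set_integrable_half_disk_continuous continuous_intros
        continuous_on_w continuous_on_W1 continuous_on_W2) blast+
  show "AE x in lborel. x \<in> {-1<..<1} \<longrightarrow> ((\<lambda>t. w (x, t)) \<longlongrightarrow> \<mu> x) (at_right 0)"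
  proof (intro AE_I2 impI)
    fix x :: real
    have "continuous_on UNIV (\<lambda>t. w (x, t))"
      by (rule continuous_on_compose2[OF continuous_on_w]) (auto intro!: continuous_intros)
    then show "((\<lambda>t. w (x, t)) \<longlongrightarrow> \<mu> x) (at_right 0)"
      unfolding \<mu>_def by (simp add: continuous_on_eq_continuous_at isCont_def filterlim_at_split)
  qed
  show "AE \<theta> in lborel. \<theta> \<in> {0<..<pi} \<longrightarrow>
        (\<exists>L. ((\<lambda>r. w (r * cos \<theta>, r * sin \<theta>)) \<longlongrightarrow> L) (at_left 1) \<and> L \<le> 1 - \<gamma>)"
  proof (intro AE_I2 impI exI conjI)
    fix t :: real
    have "continuous_on UNIV (\<lambda>r. w (r * cos t, r * sin t))"
      by (rule continuous_on_compose2[OF continuous_on_w]) (auto intro!: continuous_intros)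
    then have "isCont (\<lambda>r. w (r * cos t, r * sin t)) 1"
      using continuous_on_eq_continuous_at open_UNIV UNIV_I by blast
    then have "((\<lambda>r. w (r * cos t, r * sin t)) \<longlongrightarrow> w (cos t, sin t)) (at 1)"
      by (simp add: isCont_def)
    moreover have "w (cos t, sin t) = 1 - \<gamma>"
      by (simp add: w_def norm_Pair f_1)
    ultimately show "((\<lambda>r. w (r * cos t, r * sin t)) \<longlongrightarrow> 1 - \<gamma>) (at_left 1)"
      by (simp add: filterlim_at_split)
  qed simp
qed

lemma gradient_sq_eq: "(W1 z)\<^sup>2 + (W2 z)\<^sup>2 = (f' (norm z))\<^sup>2"
  by (cases z) (simp add: W1_def W2_def f'_eq norm_Pair power_mult_distrib algebra_simps)

text \<open>In polar coordinates the Dirichlet energy is \<open>\<pi> \<integral> r (f' r)\<^sup>2 dr \<le> \<pi> m\<^sup>2 \<integral>\<^sub>a\<^sup>1 dr/r\<close>.\<close>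
lemma dirichlet_energy_le:
  "(\<integral>\<^sup>+ z\<in>half_disk. ennreal ((W1 z)\<^sup>2 + (W2 z)\<^sup>2) \<partial>lebesgue) \<le> ennreal (pi * m\<^sup>2 * ln (1/a))"
proof -
  have "continuous_on UNIV (\<lambda>r. (f' r)\<^sup>2)"
    unfolding f'_eq by (intro continuous_intros continuous_on_F1)
  then have measurable: "(\<lambda>r. ennreal ((f' r)\<^sup>2)) \<in> borel_measurable borel"
    by (intro measurable_compose[OF _ measurable_ennreal]) (simp add: borel_measurable_continuous_onI)
  have "(\<integral>\<^sup>+ z\<in>half_disk. ennreal ((W1 z)\<^sup>2 + (W2 z)\<^sup>2) \<partial>lebesgue)
      = (\<integral>\<^sup>+ z. ennreal ((f' (norm z))\<^sup>2) * indicator half_disk z \<partial>lborel)"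
    by (simp add: nn_integral_completion gradient_sq_eq)
  also have "\<dots> = (\<integral>\<^sup>+ r. ennreal (pi * r) * indicator {0..1} r * ennreal ((f' r)\<^sup>2) \<partial>lborel)"
    by (rule nn_integral_half_disk_radial[OF measurable])
  also have "\<dots> \<le> (\<integral>\<^sup>+ r. ennreal (pi * m\<^sup>2 / r) * indicator {a..1} r \<partial>lborel)"
  proof (intro nn_integral_mono)
    fix r :: real
    have "pi * r * (f' r)\<^sup>2 \<le> pi * m\<^sup>2 / r" if "a < r"
    proof -
      have "pi * r * (f' r)\<^sup>2 \<le> pi * r * (m\<^sup>2 / r\<^sup>2)"
        using f'_sq_le[of r] that a_pos by (intro mult_left_mono) auto
      also have "\<dots> = pi * m\<^sup>2 / r" using that a_pos by (simp add: power2_eq_square field_simps)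
      finally show ?thesis .
    qed
    then show "ennreal (pi * r) * indicator {0..1} r * ennreal ((f' r)\<^sup>2)
        \<le> ennreal (pi * m\<^sup>2 / r) * indicator {a..1} r"
      using f_inner[of r] a_pos
      by (cases "r \<le> a") (auto simp: indicator_def ennreal_mult'[symmetric] ennreal_leI)
  qed
  also have "\<dots> = ennreal (pi * m\<^sup>2 * ln 1 - pi * m\<^sup>2 * ln a)"
    using a_pos a_lt_b b_lt_1
    by (intro nn_integral_FTC_atLeastAtMost) (auto intro!: derivative_eq_intros continuous_intros)
  also have "pi * m\<^sup>2 * ln 1 - pi * m\<^sup>2 * ln a = pi * m\<^sup>2 * ln (1/a)"
    using a_pos by (simp add: ln_div)
  finally show ?thesis .
qed

lemma \<mu>_eq: "\<mu> x = f \<bar>x\<bar>"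
  by (simp add: \<mu>_def w_def)

lemma g_eq: "g x = x * F1 \<bar>x\<bar>"
  by (simp add: g_def W1_def)

lemma continuous_on_g: "continuous_on UNIV g"
  unfolding g_def[abs_def]
  by (rule continuous_on_compose2[OF continuous_on_W1]) (auto intro!: continuous_intros)

lemma \<mu>_has_real_derivative: "(\<mu> has_real_derivative g x) (at x)"
proof -
  have "((\<lambda>x. (x, 0::real)) has_derivative (\<lambda>k. (k, 0))) (at x)"
    by (auto intro!: derivative_eq_intros)
  from has_derivative_compose[OF this w_has_derivative]
  have "(\<mu> has_derivative (\<lambda>k. k * g x)) (at x)"
    unfolding \<mu>_def[abs_def] g_def by (simp add: algebra_simps)
  then show ?thesis by (simp add: has_field_derivative_def mult_commute_abs)
qed

lemma W12_interval_\<mu>: "W12_interval \<mu> g"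
  unfolding W12_interval_def
proof (intro conjI ballI)
  show "g \<in> borel_measurable lborel"
    using continuous_on_g by (simp add: borel_measurable_continuous_onI)
  show "set_integrable lborel {-1..1} g" "set_integrable lborel {-1..1} (\<lambda>x. (g x)\<^sup>2)"
    using continuous_on_g
    by (auto intro!: borel_integrable_atLeastAtMost' continuous_intros intro: continuous_on_subset)
  fix x :: real
  have "(LBINT t=ereal (-1)..ereal x. g t) = \<mu> x - \<mu> (-1)"
    using \<mu>_has_real_derivative continuous_on_g
    by (intro interval_integral_FTC_finite)
      (auto simp: has_real_derivative_iff_has_vector_derivative[symmetric]
        has_field_derivative_at_within intro: continuous_on_subset)
  moreover have "(- 1 :: ereal) = ereal (- 1)" by (simp add: one_ereal_def)
  ultimately show "\<mu> x = \<mu> (-1) + (LBINT t=-1..x. g t)"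
    by simp
qed

lemma \<mu>_in_M_gamma: "\<mu> \<in> M_gamma \<gamma>"
  unfolding M_gamma_def
proof (intro CollectI conjI ballI exI)
  show "W12_interval \<mu> g" by (rule W12_interval_\<mu>)
  show "\<mu> 0 = 1" "\<mu> (-1) \<le> 1 - \<gamma>" "\<mu> 1 \<le> 1 - \<gamma>"
    using f_0 f_1 by (simp_all add: \<mu>_eq)
  show "\<bar>\<mu> x\<bar> \<le> 1" if "x \<in> {-1..1}" for x
  proof -
    have "\<bar>x\<bar> \<le> 1" using that by auto
    then show ?thesis using f_bounds[of "\<bar>x\<bar>"] \<gamma>_lt \<beta>_pos unfolding \<mu>_eq by (auto simp: abs_le_iff)
  qed
qed

lemma weighted_energy_density_le:
  assumes "\<bar>x\<bar> \<le> 1"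
  shows "(g x)\<^sup>2 / (1 - (\<mu> x)\<^sup>2) \<le> (if \<bar>x\<bar> \<le> a then 0 else 2 * m / (\<beta> * x\<^sup>2))"
proof -
  have "(g x)\<^sup>2 = (f' \<bar>x\<bar>)\<^sup>2" unfolding g_eq f'_eq by (simp add: power_mult_distrib)
  then show ?thesis
    using f'_sq_div_le[of "\<bar>x\<bar>"] assms unfolding \<mu>_eq power2_abs by simp
qed

lemma weighted_energy_le:
  "(\<integral>\<^sup>+ x\<in>{-1<..<1}. ennreal ((g x)\<^sup>2 / (1 - (\<mu> x)\<^sup>2)) \<partial>lborel) \<le> ennreal (4 * m / (\<beta> * a))"
proof -
  define K where "K = 2 * m / \<beta>"
  have K: "0 < K" using m_pos \<beta>_pos by (simp add: K_def)
  have FTC: "(\<integral>\<^sup>+ x. ennreal (K / x\<^sup>2) * indicator {s..t} x \<partial>lborel) = ennreal (K / s - K / t)"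
    if "s \<le> t" "0 < s \<or> t < 0" for s t
    using that K by (intro nn_integral_FTC_atLeastAtMost[where F = "\<lambda>x. - K / x", THEN trans])
      (auto intro!: derivative_eq_intros continuous_intros simp: power2_eq_square)
  have "(\<integral>\<^sup>+ x\<in>{-1<..<1}. ennreal ((g x)\<^sup>2 / (1 - (\<mu> x)\<^sup>2)) \<partial>lborel)
     \<le> (\<integral>\<^sup>+ x. ennreal (K / x\<^sup>2) * indicator {-1..-a} x + ennreal (K / x\<^sup>2) * indicator {a..1} x \<partial>lborel)"
  proof (intro nn_integral_mono)
    fix x :: real
    show "ennreal ((g x)\<^sup>2 / (1 - (\<mu> x)\<^sup>2)) * indicator {-1<..<1} x
        \<le> ennreal (K / x\<^sup>2) * indicator {-1..-a} x + ennreal (K / x\<^sup>2) * indicator {a..1} x"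
      using weighted_energy_density_le[of x] a_pos unfolding K_def
      by (cases "\<bar>x\<bar> \<le> a") (auto simp: indicator_def ennreal_neg ennreal_leI abs_if split: if_splits)
  qed
  also have "\<dots> = ennreal (K / a - K) + ennreal (K / a - K)"
    using a_pos a_lt_b b_lt_1 by (simp add: nn_integral_add FTC)
  also have "\<dots> \<le> ennreal (4 * m / (\<beta> * a))"
    using K a_pos a_lt_b b_lt_1 m_pos \<beta>_pos
    by (simp add: ennreal_plus[symmetric] K_def field_simps del: ennreal_plus)
  finally show ?thesis .
qed

lemma energy_le:
  assumes "0 < \<epsilon>"
  shows "energy \<gamma> \<epsilon> \<mu> \<le> ennreal (2 * \<epsilon> * m / (\<beta> * a) + pi * m\<^sup>2 * ln (1/a) / 2)"
proof -
  have "energy \<gamma> \<epsilon> \<mu> \<le> ennreal (\<epsilon>/2) * ennreal (4 * m / (\<beta> * a)) + ennreal (1/2) * ennreal (pi * m\<^sup>2 * ln (1/a))"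
    unfolding energy_def
    using w_in_W12_mu W12_interval_\<mu> dirichlet_energy_le weighted_energy_le
    by (intro add_mono mult_left_mono INF_lower2) auto
  moreover have "0 \<le> \<epsilon>/2" "0 \<le> 4 * m / (\<beta> * a)" "0 \<le> (1::real)/2" "0 \<le> pi * m\<^sup>2 * ln (1/a)"
    using assms m_pos \<beta>_pos a_pos a_lt_b b_lt_1 one_lt_ln_inverse_a by (auto intro!: mult_nonneg_nonneg)
  then have "ennreal (\<epsilon>/2) * ennreal (4 * m / (\<beta> * a)) + ennreal (1/2) * ennreal (pi * m\<^sup>2 * ln (1/a))
      = ennreal (\<epsilon>/2 * (4 * m / (\<beta> * a)) + 1/2 * (pi * m\<^sup>2 * ln (1/a)))"
    by (metis ennreal_mult ennreal_plus mult_nonneg_nonneg)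
  ultimately show ?thesis
    by (simp only:) (simp add: algebra_simps)
qed

end

section \<open>The energy estimate\<close>

lemma INF_energy_le_log_profile:
  fixes \<beta> \<gamma> \<delta> \<epsilon> :: real
  defines "L \<equiv> ln (1/\<delta>)"
  assumes \<beta>: "0 < \<beta>" "\<beta> < \<gamma>" "\<gamma> < 2 - \<beta>" and \<delta>: "0 < \<delta>" "\<delta> < 1" and \<epsilon>: "0 < \<epsilon>"
  shows "(INF \<mu>\<in>M_gamma \<gamma>. energy \<gamma> \<epsilon> \<mu>)
    \<le> ennreal (2 * exp 1 * \<gamma> * (\<epsilon> / \<delta>) / (\<beta> * (L + 1/2)) + pi * \<gamma>\<^sup>2 * (1 + L) / (2 * (L + 1/2)\<^sup>2))"
proof -
  define a where "a = \<delta> / exp 1"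
  define m where "m = \<gamma> / (L + 1/2)"
  have L: "0 < L" unfolding L_def using \<delta> by (simp add: field_simps)
  have ln_a: "ln (1/a) = 1 + L"
    using \<delta> by (simp add: a_def L_def ln_div)
  interpret log_profile a m \<gamma> \<beta>
  proof
    show "0 < a" "exp 1 * a < 1" using \<delta> by (simp_all add: a_def)
    show "0 < m" using \<beta> L by (simp add: m_def)
    show "\<gamma> = m * (ln (1/a) - 1/2)" unfolding ln_a m_def using L by (simp add: field_simps)
  qed (use \<beta> in auto)
  have "(INF \<mu>\<in>M_gamma \<gamma>. energy \<gamma> \<epsilon> \<mu>) \<le> energy \<gamma> \<epsilon> \<mu>"
    by (rule INF_lower[OF \<mu>_in_M_gamma])
  also have "\<dots> \<le> ennreal (2 * \<epsilon> * m / (\<beta> * a) + pi * m\<^sup>2 * ln (1/a) / 2)"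
    by (rule energy_le[OF \<epsilon>])
  also have "2 * \<epsilon> * m / (\<beta> * a) = 2 * exp 1 * \<gamma> * (\<epsilon> / \<delta>) / (\<beta> * (L + 1/2))"
    by (simp add: a_def m_def mult_ac)
  also have "pi * m\<^sup>2 * ln (1/a) / 2 = pi * \<gamma>\<^sup>2 * (1 + L) / (2 * (L + 1/2)\<^sup>2)"
    unfolding ln_a m_def by (simp add: power_divide)
  finally show ?thesis .
qed

lemma eps_ln_inverse_eps_bounds:
  fixes \<epsilon> :: real
  assumes "0 < \<epsilon>" "\<epsilon> \<le> 1/2"
  shows "0 < ln (1/\<epsilon>)" "0 < \<epsilon> * ln (1/\<epsilon>)" "\<epsilon> * ln (1/\<epsilon>) < 1"
    "ln (1 / (\<epsilon> * ln (1/\<epsilon>))) \<le> 4 * ln (1/\<epsilon>)"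
proof -
  define t where "t = ln (1/\<epsilon>)"
  have "1/2 \<le> ln (2::real)"
    using ln_le_minus_one[of "1/2"] by (simp add: ln_div)
  moreover have "ln 2 \<le> t"
    unfolding t_def using assms by (subst ln_le_cancel_iff) (auto simp: field_simps)
  ultimately have t: "1/2 \<le> t" by linarith
  then show "0 < ln (1/\<epsilon>)" unfolding t_def by simp
  then show "0 < \<epsilon> * ln (1/\<epsilon>)" using assms by simp
  have "t < 1/\<epsilon>" unfolding t_def using assms by (intro ln_less_self) simp
  then show "\<epsilon> * ln (1/\<epsilon>) < 1" using assms unfolding t_def[symmetric] by (simp add: field_simps)
  have "ln (1 / (\<epsilon> * t)) = - ln \<epsilon> - ln t"
    using assms t by (simp add: ln_div ln_mult)
  moreover have "t = - ln \<epsilon>"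
    unfolding t_def using assms by (simp add: ln_div)
  ultimately have "ln (1 / (\<epsilon> * t)) = t - ln t" by simp
  moreover have "- ln t \<le> 1/t - 1"
    using ln_le_minus_one[of "1/t"] t by (simp add: ln_div)
  moreover have "1/t \<le> 2" using t by (simp add: field_simps)
  ultimately show "ln (1 / (\<epsilon> * ln (1/\<epsilon>))) \<le> 4 * ln (1/\<epsilon>)"
    unfolding t_def[symmetric] using t by linarith
qed

text \<open>With \<open>\<delta> = \<epsilon> t\<close>, \<open>t = log (1/\<epsilon>)\<close> and \<open>L = log (1/\<delta>) \<le> 4 t\<close>, the first term of the profile
  bound is \<open>O (1/L\<^sup>2)\<close>, while \<open>(1 + L)/(L + 1/2)\<^sup>2 \<le> 1/L\<close> bounds the second.\<close>
lemma log_profile_bound_le: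
  fixes \<beta> \<gamma> t L :: real
  assumes "0 < \<beta>" "0 < \<gamma>" "\<gamma> < 2" "0 < t" "0 < L" "L \<le> 4 * t"
  shows "2 * exp 1 * \<gamma> * (1 / t) / (\<beta> * (L + 1/2)) + pi * \<gamma>\<^sup>2 * (1 + L) / (2 * (L + 1/2)\<^sup>2)
    \<le> pi * \<gamma>\<^sup>2 / (2 * L) + 16 * exp 1 / \<beta> / L\<^sup>2"
proof -
  have "\<gamma> / (L + 1/2) \<le> \<gamma> / L"
    using assms by (intro divide_left_mono) auto
  also have "\<dots> \<le> 2 / L"
    using assms by (intro divide_right_mono) auto
  finally have "\<gamma> / (L + 1/2) \<le> 2 / L" .
  moreover have "1 / t \<le> 4 / L"
    using assms by (simp add: field_simps)
  ultimately have "\<gamma> / (L + 1/2) * (1 / t) \<le> 2 / L * (4 / L)"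
    using assms by (intro mult_mono) auto
  then have "2 * exp 1 / \<beta> * (\<gamma> / (L + 1/2) * (1 / t)) \<le> 2 * exp 1 / \<beta> * (2 / L * (4 / L))"
    using assms by (intro mult_left_mono) auto
  moreover have "(1 + L) * L \<le> (L + 1/2)\<^sup>2"
    by (simp add: power2_eq_square algebra_simps)
  then have "pi * \<gamma>\<^sup>2 / 2 * ((1 + L) / (L + 1/2)\<^sup>2) \<le> pi * \<gamma>\<^sup>2 / 2 * (1 / L)"
    using assms by (intro mult_left_mono) (auto simp: field_simps)
  moreover have "2 * exp 1 * \<gamma> * (1 / t) / (\<beta> * (L + 1/2))
      = 2 * exp 1 / \<beta> * (\<gamma> / (L + 1/2) * (1 / t))"
    by (simp add: mult_ac)
  moreover have "2 * exp 1 / \<beta> * (2 / L * (4 / L)) = 16 * exp 1 / \<beta> / L\<^sup>2"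
    by (simp add: field_simps power2_eq_square)
  moreover have "pi * \<gamma>\<^sup>2 * (1 + L) / (2 * (L + 1/2)\<^sup>2) = pi * \<gamma>\<^sup>2 / 2 * ((1 + L) / (L + 1/2)\<^sup>2)"
    "pi * \<gamma>\<^sup>2 / 2 * (1 / L) = pi * \<gamma>\<^sup>2 / (2 * L)"
    by simp_all
  ultimately show ?thesis by linarith
qed

theorem proposition4p2:
  fixes \<beta> :: real
  assumes "0 < \<beta>" and "\<beta> < 1"
  shows "\<exists>C0 > 0. \<forall>\<gamma> \<epsilon>. \<beta> < \<gamma> \<and> \<gamma> < 2 - \<beta> \<and> 0 < \<epsilon> \<and> \<epsilon> \<le> 1/2 \<longrightarrow>
           (let \<delta> = \<epsilon> * ln (1 / \<epsilon>) in
             (INF \<mu>\<in>M_gamma \<gamma>. energy \<gamma> \<epsilon> \<mu>)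
               \<le> ennreal (pi * \<gamma>\<^sup>2 / (2 * ln (1 / \<delta>)) + C0 / (ln (1 / \<delta>))\<^sup>2))"
proof (intro exI[of _ "16 * exp 1 / \<beta>"] conjI allI impI)
  show "0 < 16 * exp 1 / \<beta>" using assms by simp
  fix \<gamma> \<epsilon> :: real
  assume H: "\<beta> < \<gamma> \<and> \<gamma> < 2 - \<beta> \<and> 0 < \<epsilon> \<and> \<epsilon> \<le> 1/2"
  define t where "t = ln (1/\<epsilon>)"
  define \<delta> where "\<delta> = \<epsilon> * t"
  define L where "L = ln (1/\<delta>)"
  have t: "0 < t" and \<delta>: "0 < \<delta>" "\<delta> < 1" and L_le: "L \<le> 4 * t"
    using eps_ln_inverse_eps_bounds[of \<epsilon>] H unfolding t_def \<delta>_def L_def by auto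
  have "0 < L" unfolding L_def using \<delta> by (simp add: field_simps)
  have "\<epsilon> / \<delta> = 1 / t" using H by (simp add: \<delta>_def)
  have "(INF \<mu>\<in>M_gamma \<gamma>. energy \<gamma> \<epsilon> \<mu>)
      \<le> ennreal (2 * exp 1 * \<gamma> * (\<epsilon> / \<delta>) / (\<beta> * (L + 1/2)) + pi * \<gamma>\<^sup>2 * (1 + L) / (2 * (L + 1/2)\<^sup>2))"
    unfolding L_def using assms H \<delta> by (intro INF_energy_le_log_profile) auto
  also have "\<dots> \<le> ennreal (pi * \<gamma>\<^sup>2 / (2 * L) + 16 * exp 1 / \<beta> / L\<^sup>2)"
    unfolding \<open>\<epsilon> / \<delta> = 1 / t\<close> using assms H t \<open>0 < L\<close> L_le
    by (intro ennreal_leI log_profile_bound_le) auto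
  finally show "let \<delta> = \<epsilon> * ln (1 / \<epsilon>) in (INF \<mu>\<in>M_gamma \<gamma>. energy \<gamma> \<epsilon> \<mu>)
      \<le> ennreal (pi * \<gamma>\<^sup>2 / (2 * ln (1 / \<delta>)) + 16 * exp 1 / \<beta> / (ln (1 / \<delta>))\<^sup>2)"
    unfolding Let_def L_def \<delta>_def t_def .
qed

end
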